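(* Let $\mathcal{A}$ be a finite-dimensional unital associative algebra over a field $\mathrm{k}$. Then $\mathcal{A}$ has only finitely many subalgebras if and only if $\mathcal{A}$ has only finitely many subalgebras generated by one element (i.e. of the form $\mathrm{k}[y]$, $y\in\mathcal{A}$).
   Context: Subalgebras are unital (contain $1$). *)

theory Defs
  imports Complex_Main
begin

definition fd_algebra :: "('k::field \<Rightarrow> 'a::ring_1 \<Rightarrow> 'a) \<Rightarrow> bool" where
  "fd_algebra scale \<longleftrightarrow>
     vector_space scale \<and>
     (\<forall>c x y. scale c (x * y) = scale c x * y) \<and>
     (\<forall>c x y. scale c (x * y) = x * scale c y) \<and>
     (\<exists>B. finite B \<and> module.span scale B = UNIV)"

definition is_subalgebra :: "('k::field \<Rightarrow> 'a::ring_1 \<Rightarrow> 'a) \<Rightarrow> 'a set \<Rightarrow> bool" where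
  "is_subalgebra scale S \<longleftrightarrow>
     module.subspace scale S \<and> 1 \<in> S \<and> (\<forall>x\<in>S. \<forall>y\<in>S. x * y \<in> S)"

definition gen_subalgebra :: "('k::field \<Rightarrow> 'a::ring_1 \<Rightarrow> 'a) \<Rightarrow> 'a \<Rightarrow> 'a set" where
  "gen_subalgebra scale y = \<Inter> {S. is_subalgebra scale S \<and> y \<in> S}"

end

theory Submission
  imports Defs
begin

text \<open>Every subalgebra is the union of the one-generated subalgebras k[y] of its elements, so it is
  determined by a subset of the set of one-generated subalgebras.\<close>

lemma is_subalgebra_Inter:
  fixes scale :: "'k::field \<Rightarrow> 'a::ring_1 \<Rightarrow> 'a"
  assumes "module scale" and "\<And>S. S \<in> F \<Longrightarrow> is_subalgebra scale S"
  shows "is_subalgebra scale (\<Inter>F)"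
  using assms module.subspace_UNIV[OF assms(1)]
  by (auto simp: is_subalgebra_def module.subspace_def[OF assms(1)])

lemma is_subalgebra_gen_subalgebra:
  fixes scale :: "'k::field \<Rightarrow> 'a::ring_1 \<Rightarrow> 'a"
  assumes "module scale"
  shows "is_subalgebra scale (gen_subalgebra scale y)"
  unfolding gen_subalgebra_def by (rule is_subalgebra_Inter[OF assms]) simp

lemma gen_subalgebra_mem: "y \<in> gen_subalgebra scale y"
  by (simp add: gen_subalgebra_def)

lemma gen_subalgebra_least:
  "is_subalgebra scale S \<Longrightarrow> y \<in> S \<Longrightarrow> gen_subalgebra scale y \<subseteq> S"
  by (auto simp: gen_subalgebra_def)

lemma subalgebra_eq_Union_gen_subalgebra:
  assumes "is_subalgebra scale S"
  shows "S = \<Union>(gen_subalgebra scale ` S)"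
  using gen_subalgebra_mem gen_subalgebra_least[OF assms] by blast

lemma finite_subalgebras_iff_finite_gen_subalgebras:
  fixes scale :: "'k::field \<Rightarrow> 'a::ring_1 \<Rightarrow> 'a"
  assumes "module scale"
  shows "finite {S. is_subalgebra scale S} \<longleftrightarrow> finite (range (gen_subalgebra scale))"
proof
  assume "finite {S. is_subalgebra scale S}"
  moreover have "range (gen_subalgebra scale) \<subseteq> {S. is_subalgebra scale S}"
    using is_subalgebra_gen_subalgebra[OF assms] by blast
  ultimately show "finite (range (gen_subalgebra scale))"
    by (rule finite_subset[rotated])
next
  assume finite_gen: "finite (range (gen_subalgebra scale))"
  let ?Sub = "{S. is_subalgebra scale S}"
  have "inj_on (image (gen_subalgebra scale)) ?Sub"
    by (rule inj_onI) (metis subalgebra_eq_Union_gen_subalgebra mem_Collect_eq)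
  moreover have "image (gen_subalgebra scale) ` ?Sub \<subseteq> Pow (range (gen_subalgebra scale))"
    by blast
  then have "finite (image (gen_subalgebra scale) ` ?Sub)"
    using finite_gen by (meson finite_Pow_iff finite_subset)
  ultimately show "finite ?Sub"
    by (rule finite_imageD[rotated])
qed

theorem lemma3p9:
  fixes scale :: "'k::field \<Rightarrow> 'a::ring_1 \<Rightarrow> 'a"
  assumes "fd_algebra scale"
  shows "finite {S. is_subalgebra scale S} \<longleftrightarrow> finite (range (gen_subalgebra scale))"
proof -
  have "module scale"
    using assms by (simp add: fd_algebra_def vector_space_def module_def)
  then show ?thesis
    by (rule finite_subalgebras_iff_finite_gen_subalgebras)
qed

end
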